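(* Consider the coding-DNA embedding setting described in the context, and let $C_\mathrm{c}=\max_{p(x')} R_\mathrm{c}^{X'}$, the maximum over all probability distributions of $X'$ on $\mathcal{X}'$. Then $C_\mathrm{c}$ is achieved by a deterministic distribution of $X'$, namely the point mass $p(x')=\mathbb{1}[x'=\xi']$ at the amino acid $\xi'\in\mathcal{X}'$ for which the (maximised over $p(\mathbf{u}|\xi')$) output entropy $H(\mathbf{Z}_{(m)})$ is largest among the 21 deterministic distributions of $X'$.
   Context: Let $\mathcal{X}=\{\mathrm{A},\mathrm{C},\mathrm{T},\mathrm{G}\}$ (DNA bases); codons are elements of $\mathcal{X}^3$. Let $\mathcal{X}'=\{$Ala, Arg, Asn, Asp, Cys, Gln, Glu, Gly, His, Ile, Leu, Lys, Met, Phe, Pro, Ser, Thr, Trp, Tyr, Val, Stp$\}$. The genetic code is the map $\alpha:\mathcal{X}^3\to\mathcal{X}'$ whose fibres $\mathcal{S}_{x'}=\{\mathbf{x}\in\mathcal{X}^3:\alpha(\mathbf{x})=x'\}$ are: Ala: GCA, GCC, GCT, GCG; Arg: AGA, AGG, CGA, CGC, CGT, CGG; Asn: AAC, AAT; Asp: GAC, GAT; Cys: TGC, TGT; Gln: CAA, CAG; Glu: GAA, GAG; Gly: GGA, GGC, GGT, GGG; His: CAC, CAT; Ile: ATA, ATC, ATT; Leu: CTA, CTC, CTT, CTG, TTA, TTG; Lys: AAA, AAG; Met: ATG; Phe: TTC, TTT; Pro: CCA, CCC, CCT, CCG; Ser: AGC, AGT, TCA, TCC, TCT, TCG; Thr: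 ACA, ACC, ACT, ACG; Trp: TGG; Tyr: TAC, TAT; Val: GTA, GTC, GTT, GTG; Stp: TAA, TAG, TGA. These 21 sets partition $\mathcal{X}^3$. Mutation channel (Kimura model): for parameters $q\in[0,1]$ and $\gamma\in[0,3/2]$, the $4\times4$ base transition matrix $\Pi=[p(Z=z|Y=y)]$ (rows/columns ordered A, C, T, G) has diagonal entries $1-q$, entries $(1-2\gamma/3)q$ for the pairs $\{\mathrm{A},\mathrm{G}\}$ and $\{\mathrm{C},\mathrm{T}\}$, and entries $\gamma q/3$ for all other off-diagonal pairs. After $m\ge1$ cascaded independent mutation stages, a codon $\mathbf{u}$ is mapped to a random codon $\mathbf{Z}_{(m)}$ through the $64\times64$ transition matrix $\Pi^m\otimes\Pi^m\otimes\Pi^m$ (bases mutate independently). Achievable rate: given a distribution $p(x')$ of the host amino acid $X'$ on $\mathcal{X}'$, consider conditional distributions $p(\mathbf{u}|x')$ supported on $\mathcal{S}_{x'}$, and let $\mathbf{U}$ be the codon with $p(\mathbf{u})=p(x')p(\mathbf{u}|x')$ for $\mathbf{u}\in\mathcal{S}_{x'}$; $\mathbf{U}$ is the channel input and $\mathbf{Z}_{(m)}$ the output. The achievable rate is $R_\mathrm{c}^{X'}=\max_{p(\mathbf{u}|x')} I(\mathbf{Z}_{(m)};\mathbf{U})-H(X')$ bits/codon (logarithms base 2). *)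

theory Defs
  imports "HOL-Analysis.Analysis"
begin

datatype base = BA | BC | BT | BG

lemma UNIV_base: "(UNIV :: base set) = {BA, BC, BT, BG}"
  using base.exhaust by auto

instance base :: finite
  by standard (simp add: UNIV_base)

type_synonym codon = "base \<times> base \<times> base"

text \<open>The 21 elements of X' (20 amino acids and the stop symbol).\<close>
datatype aa = Ala | Arg | Asn | Asp | Cys | Gln | Glu | Gly | His | Ile | Leu
  | Lys | Met | Phe | Pro | Ser | Thr | Trp | Tyr | Val | Stp

lemma UNIV_aa: "(UNIV :: aa set) =
  {Ala, Arg, Asn, Asp, Cys, Gln, Glu, Gly, His, Ile, Leu, Lys, Met, Phe, Pro, Ser, Thr, Trp, Tyr, Val, Stp}"
  using aa.exhaust by auto

instance aa :: finite
  by standard (simp add: UNIV_aa)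

fun gcode :: "codon \<Rightarrow> aa" where
  "gcode (BG, BC, BA) = Ala" |
  "gcode (BG, BC, BC) = Ala" |
  "gcode (BG, BC, BT) = Ala" |
  "gcode (BG, BC, BG) = Ala" |
  "gcode (BA, BG, BA) = Arg" |
  "gcode (BA, BG, BG) = Arg" |
  "gcode (BC, BG, BA) = Arg" |
  "gcode (BC, BG, BC) = Arg" |
  "gcode (BC, BG, BT) = Arg" |
  "gcode (BC, BG, BG) = Arg" |
  "gcode (BA, BA, BC) = Asn" |
  "gcode (BA, BA, BT) = Asn" |
  "gcode (BG, BA, BC) = Asp" |
  "gcode (BG, BA, BT) = Asp" |
  "gcode (BT, BG, BC) = Cys" |
  "gcode (BT, BG, BT) = Cys" |
  "gcode (BC, BA, BA) = Gln" |
  "gcode (BC, BA, BG) = Gln" |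
  "gcode (BG, BA, BA) = Glu" |
  "gcode (BG, BA, BG) = Glu" |
  "gcode (BG, BG, BA) = Gly" |
  "gcode (BG, BG, BC) = Gly" |
  "gcode (BG, BG, BT) = Gly" |
  "gcode (BG, BG, BG) = Gly" |
  "gcode (BC, BA, BC) = His" |
  "gcode (BC, BA, BT) = His" |
  "gcode (BA, BT, BA) = Ile" |
  "gcode (BA, BT, BC) = Ile" |
  "gcode (BA, BT, BT) = Ile" |
  "gcode (BC, BT, BA) = Leu" |
  "gcode (BC, BT, BC) = Leu" |
  "gcode (BC, BT, BT) = Leu" |
  "gcode (BC, BT, BG) = Leu" |
  "gcode (BT, BT, BA) = Leu" |
  "gcode (BT, BT, BG) = Leu" |
  "gcode (BA, BA, BA) = Lys" |
  "gcode (BA, BA, BG) = Lys" |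
  "gcode (BA, BT, BG) = Met" |
  "gcode (BT, BT, BC) = Phe" |
  "gcode (BT, BT, BT) = Phe" |
  "gcode (BC, BC, BA) = Pro" |
  "gcode (BC, BC, BC) = Pro" |
  "gcode (BC, BC, BT) = Pro" |
  "gcode (BC, BC, BG) = Pro" |
  "gcode (BA, BG, BC) = Ser" |
  "gcode (BA, BG, BT) = Ser" |
  "gcode (BT, BC, BA) = Ser" |
  "gcode (BT, BC, BC) = Ser" |
  "gcode (BT, BC, BT) = Ser" |
  "gcode (BT, BC, BG) = Ser" |
  "gcode (BA, BC, BA) = Thr" |
  "gcode (BA, BC, BC) = Thr" |
  "gcode (BA, BC, BT) = Thr" |
  "gcode (BA, BC, BG) = Thr" |
  "gcode (BT, BG, BG) = Trp" |
  "gcode (BT, BA, BC) = Tyr" |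
  "gcode (BT, BA, BT) = Tyr" |
  "gcode (BG, BT, BA) = Val" |
  "gcode (BG, BT, BC) = Val" |
  "gcode (BG, BT, BT) = Val" |
  "gcode (BG, BT, BG) = Val" |
  "gcode (BT, BA, BA) = Stp" |
  "gcode (BT, BA, BG) = Stp" |
  "gcode (BT, BG, BA) = Stp"

definition fibre :: "aa \<Rightarrow> codon set" where
  "fibre x' = {u. gcode u = x'}"

text \<open>Kimura base transition matrix Pi (row y, column z): p(Z=z|Y=y).\<close>
definition transition_pair :: "base \<Rightarrow> base \<Rightarrow> bool" where
  "transition_pair y z \<longleftrightarrow> {y, z} = {BA, BG} \<or> {y, z} = {BC, BT}"

definition kimura :: "real \<Rightarrow> real \<Rightarrow> base \<Rightarrow> base \<Rightarrow> real" where
  "kimura q \<gamma> y z =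
     (if y = z then 1 - q
      else if transition_pair y z then (1 - 2 * \<gamma> / 3) * q
      else \<gamma> * q / 3)"

fun kimura_pow :: "real \<Rightarrow> real \<Rightarrow> nat \<Rightarrow> base \<Rightarrow> base \<Rightarrow> real" where
  "kimura_pow q \<gamma> 0 y z = (if y = z then 1 else 0)"
| "kimura_pow q \<gamma> (Suc n) y z = (\<Sum>w\<in>UNIV. kimura_pow q \<gamma> n y w * kimura q \<gamma> w z)"

definition codon_chan :: "real \<Rightarrow> real \<Rightarrow> nat \<Rightarrow> codon \<Rightarrow> codon \<Rightarrow> real" where
  "codon_chan q \<gamma> m u z =
     (case u of (u1, u2, u3) \<Rightarrow> case z of (z1, z2, z3) \<Rightarrow>
        kimura_pow q \<gamma> m u1 z1 * kimura_pow q \<gamma> m u2 z2 * kimura_pow q \<gamma> m u3 z3)"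

definition is_dist :: "(aa \<Rightarrow> real) \<Rightarrow> bool" where
  "is_dist p \<longleftrightarrow> (\<forall>x. 0 \<le> p x) \<and> (\<Sum>x\<in>UNIV. p x) = 1"

definition is_cond :: "(aa \<Rightarrow> codon \<Rightarrow> real) \<Rightarrow> bool" where
  "is_cond c \<longleftrightarrow> (\<forall>x' u. 0 \<le> c x' u) \<and> (\<forall>x' u. u \<notin> fibre x' \<longrightarrow> c x' u = 0)
                  \<and> (\<forall>x'. (\<Sum>u\<in>fibre x'. c x' u) = 1)"

definition pU :: "(aa \<Rightarrow> real) \<Rightarrow> (aa \<Rightarrow> codon \<Rightarrow> real) \<Rightarrow> codon \<Rightarrow> real" where
  "pU p c u = p (gcode u) * c (gcode u) u"

definition pZ :: "real \<Rightarrow> real \<Rightarrow> nat \<Rightarrow> (aa \<Rightarrow> real) \<Rightarrow> (aa \<Rightarrow> codon \<Rightarrow> real) \<Rightarrow> codon \<Rightarrow> real" where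
  "pZ q \<gamma> m p c z = (\<Sum>u\<in>UNIV. pU p c u * codon_chan q \<gamma> m u z)"

definition plog :: "real \<Rightarrow> real" where
  "plog t = (if t = 0 then 0 else t * log 2 t)"

definition entropy_X :: "(aa \<Rightarrow> real) \<Rightarrow> real" where
  "entropy_X p = - (\<Sum>x\<in>UNIV. plog (p x))"

definition entropy_Z :: "real \<Rightarrow> real \<Rightarrow> nat \<Rightarrow> (aa \<Rightarrow> real) \<Rightarrow> (aa \<Rightarrow> codon \<Rightarrow> real) \<Rightarrow> real" where
  "entropy_Z q \<gamma> m p c = - (\<Sum>z\<in>UNIV. plog (pZ q \<gamma> m p c z))"

definition mutual_info :: "real \<Rightarrow> real \<Rightarrow> nat \<Rightarrow> (aa \<Rightarrow> real) \<Rightarrow> (aa \<Rightarrow> codon \<Rightarrow> real) \<Rightarrow> real" where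
  "mutual_info q \<gamma> m p c =
     (\<Sum>u\<in>UNIV. \<Sum>z\<in>UNIV.
        (let j = pU p c u * codon_chan q \<gamma> m u z in
         if j = 0 then 0 else j * log 2 (codon_chan q \<gamma> m u z / pZ q \<gamma> m p c z)))"

definition rate :: "real \<Rightarrow> real \<Rightarrow> nat \<Rightarrow> (aa \<Rightarrow> real) \<Rightarrow> real" where
  "rate q \<gamma> m p = (SUP c\<in>{c. is_cond c}. mutual_info q \<gamma> m p c - entropy_X p)"

definition capacity :: "real \<Rightarrow> real \<Rightarrow> nat \<Rightarrow> real" where
  "capacity q \<gamma> m = (SUP p\<in>{p. is_dist p}. rate q \<gamma> m p)"

definition point_mass :: "aa \<Rightarrow> aa \<Rightarrow> real" where
  "point_mass \<xi> = (\<lambda>x. if x = \<xi> then 1 else 0)"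

definition max_out_entropy :: "real \<Rightarrow> real \<Rightarrow> nat \<Rightarrow> aa \<Rightarrow> real" where
  "max_out_entropy q \<gamma> m \<xi> = (SUP c\<in>{c. is_cond c}. entropy_Z q \<gamma> m (point_mass \<xi>) c)"

end

theory Submission
  imports Defs
begin

text \<open>
  The codon channel is symmetric: translating input and output codon by the same element of
  \<open>(\<int>/2)\<^sup>6\<close> preserves the transition probability. Hence all rows of the channel have the
  same entropy \<open>h\<close>, and \<open>I(Z;U) = H(Z) - h\<close> for every input. Since \<open>X'\<close> is a function of \<open>U\<close>,
  \<open>H(Z) \<le> H(X') + \<Sum> p(x') H(Z | X' = x')\<close>, so the rate is at most
  \<open>\<Sum> p(x') max H(Z | X' = x') - h \<le> max H(Z | X' = \<xi>') - h\<close>; the point mass at \<open>\<xi>'\<close>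
  attains this bound because it has \<open>H(X') = 0\<close>.
\<close>

section \<open>Symmetry of the Kimura channel\<close>

text \<open>
  Identifying A, G, C, T with 00, 01, 10, 11 this is addition in \<open>(\<int>/2)\<^sup>2\<close>; the Kimura
  matrix depends only on the difference \<open>y + z\<close> (0: no mutation, G: transition, C or T:
  transversion).
\<close>
fun base_add :: "base \<Rightarrow> base \<Rightarrow> base" where
  "base_add BA b = b"
| "base_add BG b = (case b of BA \<Rightarrow> BG | BG \<Rightarrow> BA | BC \<Rightarrow> BT | BT \<Rightarrow> BC)"
| "base_add BC b = (case b of BA \<Rightarrow> BC | BG \<Rightarrow> BT | BC \<Rightarrow> BA | BT \<Rightarrow> BG)"
| "base_add BT b = (case b of BA \<Rightarrow> BT | BG \<Rightarrow> BC | BC \<Rightarrow> BG | BT \<Rightarrow> BA)"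

lemma base_add_cancel [simp]: "base_add t (base_add t y) = y"
  by (cases t; cases y) simp_all

lemma base_add_eq_iff [simp]: "base_add t y = base_add t z \<longleftrightarrow> y = z"
  by (metis base_add_cancel)

lemma base_add_self: "base_add t t = BA"
  by (cases t) simp_all

lemma kimura_base_add: "kimura q g (base_add t y) (base_add t z) = kimura q g y z"
  by (cases t; cases y; cases z) (auto simp: kimura_def transition_pair_def doubleton_eq_iff)

lemma sum_base_add: "(\<Sum>w\<in>UNIV. f (base_add t w)) = (\<Sum>w\<in>UNIV. f w)"
  by (rule sum.reindex_bij_witness[of _ "base_add t" "base_add t"]) auto

lemma kimura_pow_base_add:
  "kimura_pow q g n (base_add t y) (base_add t z) = kimura_pow q g n y z"
proof (induction n arbitrary: z)
  case 0
  show ?case by simp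
next
  case (Suc n)
  have "kimura_pow q g (Suc n) (base_add t y) (base_add t z)
      = (\<Sum>w\<in>UNIV. kimura_pow q g n (base_add t y) (base_add t w)
                     * kimura q g (base_add t w) (base_add t z))"
    using sum_base_add[of "\<lambda>w. kimura_pow q g n (base_add t y) w * kimura q g w (base_add t z)" t]
    by simp
  also have "\<dots> = kimura_pow q g (Suc n) y z"
    by (simp add: Suc kimura_base_add)
  finally show ?case .
qed

lemma kimura_pow_from_BA: "kimura_pow q g n BA (base_add y z) = kimura_pow q g n y z"
  using kimura_pow_base_add[of q g n y y z] by (simp add: base_add_self)

definition codon_add :: "codon \<Rightarrow> codon \<Rightarrow> codon" where
  "codon_add u z = (base_add (fst u) (fst z), base_add (fst (snd u)) (fst (snd z)),
                    base_add (snd (snd u)) (snd (snd z)))"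

lemma codon_add_cancel [simp]: "codon_add u (codon_add u z) = z"
  by (simp add: codon_add_def)

lemma codon_chan_codon_add: "codon_chan q g m u z = codon_chan q g m (BA, BA, BA) (codon_add u z)"
  by (cases u; cases z) (simp add: codon_chan_def codon_add_def kimura_pow_from_BA)

definition chan_row_entropy :: "real \<Rightarrow> real \<Rightarrow> nat \<Rightarrow> real" where
  "chan_row_entropy q g m = - (\<Sum>z\<in>UNIV. plog (codon_chan q g m (BA, BA, BA) z))"

lemma chan_row_entropy_eq: "(\<Sum>z\<in>UNIV. plog (codon_chan q g m u z)) = - chan_row_entropy q g m"
proof -
  have "(\<Sum>z\<in>UNIV. plog (codon_chan q g m u z))
      = (\<Sum>z\<in>UNIV. plog (codon_chan q g m (BA, BA, BA) (codon_add u z)))"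
    by (simp add: codon_chan_codon_add[of q g m u])
  also have "\<dots> = (\<Sum>z\<in>UNIV. plog (codon_chan q g m (BA, BA, BA) z))"
    by (rule sum.reindex_bij_witness[of _ "codon_add u" "codon_add u"]) auto
  finally show ?thesis
    by (simp add: chan_row_entropy_def)
qed

definition kimura_params :: "real \<Rightarrow> real \<Rightarrow> bool" where
  "kimura_params q g \<longleftrightarrow> 0 \<le> q \<and> q \<le> 1 \<and> 0 \<le> g \<and> g \<le> 3/2"

lemma kimura_nonneg: "kimura_params q g \<Longrightarrow> 0 \<le> kimura q g y z"
  by (auto simp: kimura_params_def kimura_def)

lemma kimura_pow_nonneg: "kimura_params q g \<Longrightarrow> 0 \<le> kimura_pow q g n y z"
  by (induction n arbitrary: z) (auto intro!: sum_nonneg mult_nonneg_nonneg kimura_nonneg)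

lemma codon_chan_nonneg: "kimura_params q g \<Longrightarrow> 0 \<le> codon_chan q g m u z"
  by (cases u; cases z) (auto simp: codon_chan_def intro!: mult_nonneg_nonneg kimura_pow_nonneg)

lemma kimura_row_sum: "(\<Sum>z\<in>UNIV. kimura q g y z) = 1"
  by (cases y) (simp_all add: UNIV_base kimura_def transition_pair_def doubleton_eq_iff algebra_simps)

lemma kimura_pow_row_sum: "(\<Sum>z\<in>UNIV. kimura_pow q g n y z) = 1"
proof (induction n)
  case 0
  show ?case by (simp add: sum.delta)
next
  case (Suc n)
  have "(\<Sum>z\<in>UNIV. kimura_pow q g (Suc n) y z)
      = (\<Sum>w\<in>UNIV. \<Sum>z\<in>UNIV. kimura_pow q g n y w * kimura q g w z)"
    by (simp only: kimura_pow.simps) (rule sum.swap)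
  also have "\<dots> = 1"
    by (simp add: sum_distrib_left[symmetric] kimura_row_sum Suc)
  finally show ?case .
qed

lemma sum_UNIV_triple:
  "(\<Sum>z\<in>(UNIV :: ('a::finite \<times> 'b::finite \<times> 'c::finite) set). f z)
   = (\<Sum>a\<in>UNIV. \<Sum>b\<in>UNIV. \<Sum>c\<in>UNIV. f (a, b, c))"
  by (simp add: sum.cartesian_product UNIV_Times_UNIV[symmetric] del: UNIV_Times_UNIV)

lemma codon_chan_row_sum: "(\<Sum>z\<in>UNIV. codon_chan q g m u z) = 1"
  by (cases u) (simp add: sum_UNIV_triple codon_chan_def kimura_pow_row_sum
      sum_distrib_left[symmetric] sum_distrib_right[symmetric])

lemma plog_mult: "0 \<le> a \<Longrightarrow> 0 \<le> b \<Longrightarrow> plog (a * b) = plog a * b + a * plog b"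
  by (auto simp: plog_def log_mult algebra_simps)

lemma plog_superadditive:
  assumes "0 \<le> a" "0 \<le> b"
  shows "plog a + plog b \<le> plog (a + b)"
proof (cases "a = 0 \<or> b = 0")
  case True
  then show ?thesis by (auto simp: plog_def)
next
  case False
  with assms have "0 < a" "0 < b" by auto
  then have "a * log 2 a + b * log 2 b \<le> a * log 2 (a + b) + b * log 2 (a + b)"
    by (intro add_mono mult_left_mono) auto
  with \<open>0 < a\<close> \<open>0 < b\<close> show ?thesis
    by (simp add: plog_def algebra_simps)
qed

lemma plog_sum_le:
  "finite A \<Longrightarrow> (\<And>x. x \<in> A \<Longrightarrow> 0 \<le> f x) \<Longrightarrow> (\<Sum>x\<in>A. plog (f x)) \<le> plog (\<Sum>x\<in>A. f x)"
proof (induction A rule: finite_induct)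
  case empty
  show ?case by (simp add: plog_def)
next
  case (insert a A)
  then have "(\<Sum>x\<in>insert a A. plog (f x)) \<le> plog (f a) + plog (\<Sum>x\<in>A. f x)"
    by simp
  also have "\<dots> \<le> plog (f a + (\<Sum>x\<in>A. f x))"
    using insert by (intro plog_superadditive) (auto intro: sum_nonneg)
  finally show ?case
    using insert by simp
qed

lemma plog_ge: assumes "0 \<le> t" shows "-2 \<le> plog t"
proof (cases "t = 0")
  case True
  then show ?thesis by (simp add: plog_def)
next
  case False
  with assms have t: "0 < t" by simp
  have "ln (1 / t) \<le> 1 / t - 1"
    using t by (intro ln_le_minus_one) simp
  then have "t * (1 - 1 / t) \<le> t * ln t"
    using t by (intro mult_left_mono) (auto simp: ln_div)
  then have "t - 1 \<le> t * ln t"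
    using t by (simp add: algebra_simps)
  moreover have "1 / 2 < ln (2 :: real)"
    using ln2_ge_two_thirds by simp
  ultimately have "-1 / ln 2 \<le> t * ln t / ln 2" and "-2 \<le> -1 / ln (2 :: real)"
    using t by (auto intro: divide_right_mono simp: field_simps)
  then show ?thesis
    using t by (simp add: plog_def log_def)
qed

lemma point_mass_is_dist: "is_dist (point_mass x)"
  by (simp add: is_dist_def point_mass_def)

lemma entropy_X_point_mass: "entropy_X (point_mass x) = 0"
proof -
  have "plog (point_mass x y) = 0" for y
    by (simp add: point_mass_def plog_def)
  then show ?thesis
    by (simp add: entropy_X_def)
qed

lemma surj_gcode: "surj gcode"
proof -
  have "x \<in> range gcode" for x
    by (induction x) (rule range_eqI, rule gcode.simps[symmetric])+
  then show ?thesis by blast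
qed

lemma ex_is_cond: "\<exists>c. is_cond c"
proof -
  define c where "c x u = (if u = inv gcode x then 1 else 0 :: real)" for x u
  have "inv gcode x \<in> fibre x" for x
    using surj_gcode by (simp add: fibre_def surj_f_inv_f)
  then have "is_cond c"
    by (auto simp: is_cond_def c_def sum.delta')
  then show ?thesis by blast
qed

lemma cond_sum_UNIV: "is_cond c \<Longrightarrow> (\<Sum>u\<in>UNIV. c x u) = 1"
  unfolding is_cond_def by (subst sum.mono_neutral_right[of UNIV "fibre x"]) auto

lemma cond_outside_fibre: "is_cond c \<Longrightarrow> gcode u \<noteq> x \<Longrightarrow> c x u = 0"
  unfolding is_cond_def fibre_def by blast

lemma pU_eq_sum:
  assumes "is_cond c"
  shows "pU p c u = (\<Sum>x\<in>UNIV. p x * c x u)"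
proof -
  have "c x u = 0" if "x \<noteq> gcode u" for x
    using assms that by (simp add: cond_outside_fibre)
  then have "(\<Sum>x\<in>UNIV. p x * c x u) = (\<Sum>x\<in>UNIV. if x = gcode u then p x * c x u else 0)"
    by (intro sum.cong) auto
  then show ?thesis
    by (simp add: pU_def)
qed

lemma pU_point_mass: "is_cond c \<Longrightarrow> pU (point_mass x) c u = c x u"
  by (auto simp: pU_def point_mass_def cond_outside_fibre)

lemma pU_nonneg: "is_dist p \<Longrightarrow> is_cond c \<Longrightarrow> 0 \<le> pU p c u"
  unfolding pU_def is_dist_def is_cond_def by (blast intro: mult_nonneg_nonneg)

lemma pU_sum:
  assumes "is_dist p" "is_cond c"
  shows "(\<Sum>u\<in>UNIV. pU p c u) = 1"
proof -
  have "(\<Sum>u\<in>UNIV. pU p c u) = (\<Sum>u\<in>UNIV. \<Sum>x\<in>UNIV. p x * c x u)"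
    using assms(2) by (simp add: pU_eq_sum)
  also have "\<dots> = (\<Sum>x\<in>UNIV. \<Sum>u\<in>UNIV. p x * c x u)"
    by (rule sum.swap)
  also have "\<dots> = 1"
    using assms by (simp add: sum_distrib_left[symmetric] cond_sum_UNIV is_dist_def)
  finally show ?thesis .
qed

lemma pZ_nonneg: "kimura_params q g \<Longrightarrow> is_dist p \<Longrightarrow> is_cond c \<Longrightarrow> 0 \<le> pZ q g m p c z"
  unfolding pZ_def by (intro sum_nonneg mult_nonneg_nonneg pU_nonneg codon_chan_nonneg)

lemma pZ_point_mass:
  "is_cond c \<Longrightarrow> pZ q g m (point_mass x) c z = (\<Sum>u\<in>UNIV. c x u * codon_chan q g m u z)"
  by (simp add: pZ_def pU_point_mass)

lemma pZ_mixture: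
  assumes "is_cond c"
  shows "pZ q g m p c z = (\<Sum>x\<in>UNIV. p x * pZ q g m (point_mass x) c z)"
proof -
  have "pZ q g m p c z = (\<Sum>u\<in>UNIV. \<Sum>x\<in>UNIV. p x * (c x u * codon_chan q g m u z))"
    using assms by (simp add: pZ_def pU_eq_sum sum_distrib_right mult.assoc)
  also have "\<dots> = (\<Sum>x\<in>UNIV. \<Sum>u\<in>UNIV. p x * (c x u * codon_chan q g m u z))"
    by (rule sum.swap)
  also have "\<dots> = (\<Sum>x\<in>UNIV. p x * pZ q g m (point_mass x) c z)"
    using assms by (simp add: pZ_point_mass sum_distrib_left)
  finally show ?thesis .
qed

lemma pZ_point_mass_sum:
  assumes "is_cond c"
  shows "(\<Sum>z\<in>UNIV. pZ q g m (point_mass x) c z) = 1"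
proof -
  have "(\<Sum>z\<in>UNIV. pZ q g m (point_mass x) c z)
      = (\<Sum>z\<in>UNIV. \<Sum>u\<in>UNIV. c x u * codon_chan q g m u z)"
    using assms by (simp add: pZ_point_mass)
  also have "\<dots> = (\<Sum>u\<in>UNIV. \<Sum>z\<in>UNIV. c x u * codon_chan q g m u z)"
    by (rule sum.swap)
  also have "\<dots> = 1"
    using assms by (simp add: sum_distrib_left[symmetric] codon_chan_row_sum cond_sum_UNIV)
  finally show ?thesis .
qed

lemma entropy_Z_le:
  "kimura_params q g \<Longrightarrow> is_dist p \<Longrightarrow> is_cond c
   \<Longrightarrow> entropy_Z q g m p c \<le> 2 * real (card (UNIV :: codon set))"
  using sum_mono[of UNIV "\<lambda>_. -2" "\<lambda>z. plog (pZ q g m p c z)"] plog_ge pZ_nonneg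
  by (simp add: entropy_Z_def)

section \<open>Mutual information and output entropy\<close>

lemma mutual_info_summand:
  fixes a k s :: real
  assumes "0 \<le> a" "0 \<le> k" "a * k \<le> s"
  shows "(let j = a * k in if j = 0 then 0 else j * log 2 (k / s))
         = a * plog k - (if s = 0 then 0 else a * k * log 2 s)"
proof (cases "a * k = 0")
  case True
  then show ?thesis by (auto simp: plog_def)
next
  case False
  with assms have a: "0 < a" and k: "0 < k"
    by auto
  with assms(3) have "0 < s"
    by (smt (verit) mult_pos_pos)
  with a k show ?thesis
    by (simp add: plog_def log_divide algebra_simps)
qed

lemma mutual_info_eq:
  assumes "kimura_params q g" "is_dist p" "is_cond c"
  shows "mutual_info q g m p c = entropy_Z q g m p c - chan_row_entropy q g m"
proof -
  let ?U = "pU p c" and ?K = "codon_chan q g m" and ?Z = "pZ q g m p c"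
  let ?L = "\<lambda>u z. if ?Z z = 0 then 0 else ?U u * ?K u z * log 2 (?Z z)"
  have U: "0 \<le> ?U u" and K: "0 \<le> ?K u z" for u z
    using assms by (simp_all add: pU_nonneg codon_chan_nonneg)
  have "?U u * ?K u z \<le> ?Z z" for u z
    unfolding pZ_def by (rule member_le_sum) (auto intro: mult_nonneg_nonneg U K)
  then have "mutual_info q g m p c = (\<Sum>u\<in>UNIV. \<Sum>z\<in>UNIV. ?U u * plog (?K u z) - ?L u z)"
    unfolding mutual_info_def by (simp add: mutual_info_summand U K)
  also have "\<dots> = (\<Sum>u\<in>UNIV. ?U u * (\<Sum>z\<in>UNIV. plog (?K u z))) - (\<Sum>u\<in>UNIV. \<Sum>z\<in>UNIV. ?L u z)"
    by (simp add: sum_subtractf sum_distrib_left)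
  also have "(\<Sum>u\<in>UNIV. \<Sum>z\<in>UNIV. ?L u z) = (\<Sum>z\<in>UNIV. \<Sum>u\<in>UNIV. ?L u z)"
    by (rule sum.swap)
  also have "\<dots> = (\<Sum>z\<in>UNIV. plog (?Z z))"
  proof (rule sum.cong)
    fix z
    have "(\<Sum>u\<in>UNIV. ?U u * ?K u z * log 2 (?Z z)) = ?Z z * log 2 (?Z z)"
      by (simp add: pZ_def sum_distrib_right)
    then show "(\<Sum>u\<in>UNIV. ?L u z) = plog (?Z z)"
      by (simp add: plog_def)
  qed simp
  also have "(\<Sum>u\<in>UNIV. ?U u * (\<Sum>z\<in>UNIV. plog (?K u z))) = - chan_row_entropy q g m"
    using assms by (simp add: chan_row_entropy_eq sum_negf sum_distrib_right[symmetric] pU_sum)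
  finally show ?thesis
    by (simp add: entropy_Z_def)
qed

text \<open>Superadditivity of \<open>t log t\<close> applied to \<open>p(z) = \<Sum> p(x') p(z | x')\<close>.\<close>
lemma entropy_Z_le_mixture:
  assumes "kimura_params q g" "is_dist p" "is_cond c"
  shows "entropy_Z q g m p c \<le> entropy_X p + (\<Sum>x\<in>UNIV. p x * entropy_Z q g m (point_mass x) c)"
proof -
  let ?P = "\<lambda>x z. pZ q g m (point_mass x) c z"
  have p: "0 \<le> p x" and P: "0 \<le> ?P x z" for x z
    using assms pZ_nonneg[OF assms(1) point_mass_is_dist assms(3)] by (simp_all add: is_dist_def)
  have "- entropy_X p - (\<Sum>x\<in>UNIV. p x * entropy_Z q g m (point_mass x) c)
      = (\<Sum>x\<in>UNIV. plog (p x) - p x * entropy_Z q g m (point_mass x) c)"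
    by (simp add: sum_subtractf entropy_X_def)
  also have "\<dots> = (\<Sum>x\<in>UNIV. plog (p x) * (\<Sum>z\<in>UNIV. ?P x z)
                           + p x * (\<Sum>z\<in>UNIV. plog (?P x z)))"
    using pZ_point_mass_sum[OF assms(3)] by (simp add: entropy_Z_def)
  also have "\<dots> = (\<Sum>x\<in>UNIV. \<Sum>z\<in>UNIV. plog (p x) * ?P x z + p x * plog (?P x z))"
    by (simp add: sum.distrib sum_distrib_left)
  also have "\<dots> = (\<Sum>z\<in>UNIV. \<Sum>x\<in>UNIV. plog (p x) * ?P x z + p x * plog (?P x z))"
    by (rule sum.swap)
  also have "\<dots> = (\<Sum>z\<in>UNIV. \<Sum>x\<in>UNIV. plog (p x * ?P x z))"
    using p P by (simp add: plog_mult)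
  also have "\<dots> \<le> (\<Sum>z\<in>UNIV. plog (\<Sum>x\<in>UNIV. p x * ?P x z))"
    using p P by (intro sum_mono plog_sum_le) auto
  also have "\<dots> = - entropy_Z q g m p c"
    by (simp add: pZ_mixture[OF assms(3), symmetric] entropy_Z_def)
  finally show ?thesis
    by simp
qed

lemma cSUP_diff_const:
  fixes f :: "'a \<Rightarrow> real"
  assumes "A \<noteq> {}" "bdd_above (f ` A)"
  shows "(SUP x\<in>A. f x - k) = (SUP x\<in>A. f x) - k"
proof (rule antisym)
  show "(SUP x\<in>A. f x - k) \<le> (SUP x\<in>A. f x) - k"
    using assms by (intro cSUP_least) (auto intro: cSUP_upper)
  obtain M where "\<forall>x\<in>A. f x \<le> M"
    using assms(2) by (auto simp: bdd_above_def)
  then have "bdd_above ((\<lambda>x. f x - k) ` A)"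
    by (intro bdd_aboveI2[of _ _ "M - k"]) auto
  then have "f x \<le> (SUP x\<in>A. f x - k) + k" if "x \<in> A" for x
    using cSUP_upper[of x A "\<lambda>x. f x - k"] that by simp
  then show "(SUP x\<in>A. f x) - k \<le> (SUP x\<in>A. f x - k)"
    using assms(1) by (simp add: cSUP_least diff_le_eq)
qed

lemma bdd_above_entropy_Z:
  "kimura_params q g \<Longrightarrow> is_dist p \<Longrightarrow> bdd_above ((\<lambda>c. entropy_Z q g m p c) ` {c. is_cond c})"
  by (rule bdd_aboveI2) (use entropy_Z_le in auto)

lemma entropy_Z_le_max_out_entropy:
  "kimura_params q g \<Longrightarrow> is_cond c \<Longrightarrow> entropy_Z q g m (point_mass x) c \<le> max_out_entropy q g m x"
  unfolding max_out_entropy_def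
  by (rule cSUP_upper) (simp_all add: bdd_above_entropy_Z point_mass_is_dist)

lemma rate_point_mass:
  assumes "kimura_params q g"
  shows "rate q g m (point_mass x) = max_out_entropy q g m x - chan_row_entropy q g m"
proof -
  have "rate q g m (point_mass x)
      = (SUP c\<in>{c. is_cond c}. entropy_Z q g m (point_mass x) c - chan_row_entropy q g m)"
    unfolding rate_def using assms
    by (intro SUP_cong) (simp_all add: mutual_info_eq point_mass_is_dist entropy_X_point_mass)
  also have "\<dots> = max_out_entropy q g m x - chan_row_entropy q g m"
    unfolding max_out_entropy_def using assms ex_is_cond
    by (intro cSUP_diff_const) (auto simp: bdd_above_entropy_Z point_mass_is_dist)
  finally show ?thesis .
qed

lemma rate_le:
  assumes "kimura_params q g" "is_dist p" "\<And>x. max_out_entropy q g m x \<le> M"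
  shows "rate q g m p \<le> M - chan_row_entropy q g m"
  unfolding rate_def
proof (rule cSUP_least)
  show "{c. is_cond c} \<noteq> {}"
    using ex_is_cond by simp
  fix c
  assume "c \<in> {c. is_cond c}"
  then have c: "is_cond c" by simp
  have "(\<Sum>x\<in>UNIV. p x * entropy_Z q g m (point_mass x) c) \<le> (\<Sum>x\<in>UNIV. p x * M)"
    using assms c by (intro sum_mono mult_left_mono order.trans[OF entropy_Z_le_max_out_entropy])
      (auto simp: is_dist_def)
  also have "\<dots> = M"
    using assms(2) by (simp add: is_dist_def sum_distrib_right[symmetric])
  finally show "mutual_info q g m p c - entropy_X p \<le> M - chan_row_entropy q g m"
    using mutual_info_eq[OF assms(1,2) c, of m] entropy_Z_le_mixture[OF assms(1,2) c, of m] by linarith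
qed

theorem theorem1:
  fixes q \<gamma> :: real and m :: nat and \<xi> :: aa
  assumes "0 \<le> q" "q \<le> 1" "0 \<le> \<gamma>" "\<gamma> \<le> 3/2" "1 \<le> m"
    and "\<forall>\<eta>. max_out_entropy q \<gamma> m \<eta> \<le> max_out_entropy q \<gamma> m \<xi>"
  shows "is_dist (point_mass \<xi>) \<and> rate q \<gamma> m (point_mass \<xi>) = capacity q \<gamma> m"
proof -
  have params: "kimura_params q \<gamma>"
    using assms(1-4) by (simp add: kimura_params_def)
  have "capacity q \<gamma> m = rate q \<gamma> m (point_mass \<xi>)"
    unfolding capacity_def
  proof (rule cSup_eq_maximum)
    show "rate q \<gamma> m (point_mass \<xi>) \<in> rate q \<gamma> m ` {p. is_dist p}"
      using point_mass_is_dist by blast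
    show "r \<le> rate q \<gamma> m (point_mass \<xi>)" if "r \<in> rate q \<gamma> m ` {p. is_dist p}" for r
      using that rate_le[OF params _ spec[OF assms(6)]] rate_point_mass[OF params] by auto
  qed
  then show ?thesis
    using point_mass_is_dist by simp
qed

end
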